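(* Let $k\ge 1$ and $s>2^{k-1}(2^k+1)$ be integers. Let $H$ be any graph obtained from the vertex-disjoint union of $s$ cliques $K(0),K(1),\dots,K(s-1)$, each on $2k+1$ vertices, by adding, for each $0\le i\le s-1$, a matching $M_i$ of $k$ edges between $K(i)$ and $K(i+1)$, where $K(s)=K(0)$. Then the edge connectivity of $H$ is $2k$ and $m(H)=2^k$.
   Context: All graphs are finite and simple. The edge connectivity is the minimum number of edges whose removal disconnects the graph. For graphs $G_1=(V,E_1)$, $G_2=(V,E_2)$, their symmetric difference is $(V,E_1\oplus E_2)$, where $E_1\oplus E_2$ is the set of edges in exactly one of $E_1,E_2$. A connectivity code for $H=(V,E)$ is a collection of distinct spanning subgraphs $(V,E')$, $E'\subseteq E$, such that the symmetric difference of any two distinct members is a connected graph on $V$; $m(H)$ is the maximum cardinality of a connectivity code for $H$. *)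

theory Defs
  imports Main
begin

(* Graphs are given as a vertex set V and an edge set E of 2-element subsets. *)

definition adj :: "'a set set \<Rightarrow> 'a \<Rightarrow> 'a \<Rightarrow> bool" where
  "adj E x y \<longleftrightarrow> {x, y} \<in> E"

definition connected_graph :: "'a set \<Rightarrow> 'a set set \<Rightarrow> bool" where
  "connected_graph V E \<longleftrightarrow> V \<noteq> {} \<and> (\<forall>u\<in>V. \<forall>v\<in>V. (adj E)\<^sup>*\<^sup>* u v)"

definition edge_connectivity :: "'a set \<Rightarrow> 'a set set \<Rightarrow> nat" where
  "edge_connectivity V E =
     (LEAST n. \<exists>F. F \<subseteq> E \<and> card F = n \<and> \<not> connected_graph V (E - F))"

definition sym_diff :: "'a set \<Rightarrow> 'a set \<Rightarrow> 'a set" where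
  "sym_diff A B = (A - B) \<union> (B - A)"

definition connectivity_code :: "'a set \<Rightarrow> 'a set set \<Rightarrow> 'a set set set \<Rightarrow> bool" where
  "connectivity_code V E C \<longleftrightarrow>
     (\<forall>X\<in>C. X \<subseteq> E) \<and>
     (\<forall>X\<in>C. \<forall>Y\<in>C. X \<noteq> Y \<longrightarrow> connected_graph V (sym_diff X Y))"

definition max_code :: "'a set \<Rightarrow> 'a set set \<Rightarrow> nat" where
  "max_code V E = Max {card C | C. connectivity_code V E C}"

end

(* Deleting M i \<union> M j (2 k edges, i \<noteq> j) cuts off the cliques strictly after i up to j. Deleting
   fewer than 2 k edges leaves every clique K(i) connected, since K(2 k + 1) has edge
   connectivity 2 k, and removes at most one M i completely, so the cycle of cliques survives.

   A code with more than 2^k members contains, for every i, two members agreeing on the k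
   edges of M i. Distinct indices i, j cannot give the same pair, as its symmetric difference
   would avoid M i \<union> M j and hence be disconnected; so s is at most (2^k + 1) choose 2 =
   2^(k-1) (2^k + 1). Conversely, the graph has k edge-disjoint connected spanning subgraphs,
   and the 2^k unions of subfamilies of them form a code. *)

theory Submission
  imports Defs
begin

lemma symp_adj: "symp (adj D)"
  by (auto intro: sympI simp: adj_def insert_commute)

lemma adj_rtranclp_sym: "(adj D)\<^sup>*\<^sup>* u v \<Longrightarrow> (adj D)\<^sup>*\<^sup>* v u"
  using sympD[OF symp_rtranclp[OF symp_adj]] .

lemma adj_rtranclp_edge: "{u, v} \<in> D \<Longrightarrow> (adj D)\<^sup>*\<^sup>* u v"
  by (simp add: adj_def r_into_rtranclp)

lemma connected_graph_mono:
  assumes "D \<subseteq> D'" "connected_graph V D"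
  shows "connected_graph V D'"
proof -
  have "adj D \<le> adj D'" using assms(1) by (auto simp: adj_def)
  then show ?thesis using assms(2) rtranclp_mono unfolding connected_graph_def by blast
qed

lemma connected_graphI_hub:
  assumes "V \<noteq> {}" "\<And>v. v \<in> V \<Longrightarrow> (adj D)\<^sup>*\<^sup>* v h"
  shows "connected_graph V D"
  unfolding connected_graph_def
  using assms adj_rtranclp_sym rtranclp_trans by metis

lemma not_connected_graph_if_closed:
  assumes "u \<in> V" "v \<in> V" "u \<in> W" "v \<notin> W"
    and closed: "\<And>x y. {x, y} \<in> D \<Longrightarrow> x \<in> W \<Longrightarrow> y \<in> W"
  shows "\<not> connected_graph V D"
proof
  assume "connected_graph V D"
  then have "(adj D)\<^sup>*\<^sup>* u v" using assms(1,2) unfolding connected_graph_def by blast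
  then have "v \<in> W"
    by (induction rule: rtranclp_induct) (use assms(3) closed in \<open>auto simp: adj_def\<close>)
  with assms(4) show False ..
qed

lemma rtranclp_chain:
  assumes "a \<le> b" "\<And>t. a \<le> t \<Longrightarrow> t < b \<Longrightarrow> R\<^sup>*\<^sup>* (g t) (g (Suc t))"
  shows "R\<^sup>*\<^sup>* (g a) (g b)"
  using assms by (induction b rule: dec_induct) (auto intro: rtranclp_trans)

text \<open>Walking around a cycle on \<open>{0..<s}\<close> with the link at \<open>i\<^sub>0\<close> possibly missing,
  every position still reaches \<open>i\<^sub>0\<close>: forwards if it lies below \<open>i\<^sub>0\<close>, otherwise
  forwards through \<open>s - 1\<close> and \<open>0\<close>.\<close>

lemma cycle_reaches:
  fixes s :: nat
  assumes "i\<^sub>0 < s" "c < s"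
    and link: "\<And>i. i < s \<Longrightarrow> i \<noteq> i\<^sub>0 \<Longrightarrow> R\<^sup>*\<^sup>* (g i) (g ((i + 1) mod s))"
  shows "R\<^sup>*\<^sup>* (g c) (g i\<^sub>0)"
proof -
  have step: "R\<^sup>*\<^sup>* (g t) (g (Suc t))" if "t < s - 1" "t \<noteq> i\<^sub>0" for t
    using link[of t] that by simp
  have to_i0: "R\<^sup>*\<^sup>* (g c') (g i\<^sub>0)" if "c' \<le> i\<^sub>0" for c'
    using rtranclp_chain[of c' i\<^sub>0 R g] that step assms(1) by simp
  show ?thesis
  proof (cases "c \<le> i\<^sub>0")
    case False
    have "R\<^sup>*\<^sup>* (g c) (g (s - 1))"
      using rtranclp_chain[of c "s - 1" R g] False step assms(2) by simp
    moreover have "R\<^sup>*\<^sup>* (g (s - 1)) (g 0)"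
      using link[of "s - 1"] False assms by simp
    ultimately show ?thesis using to_i0[of 0] by (meson rtranclp_trans zero_le)
  qed (rule to_i0)
qed

text \<open>Each missing edge of the complete graph on \<open>A\<close> can separate \<open>a\<close> from \<open>b\<close> only
  along one path \<open>a - c - b\<close>, and these paths are edge-disjoint.\<close>

lemma complete_graph_minus_edges_connected:
  assumes complete: "\<And>x y. x \<in> A \<Longrightarrow> y \<in> A \<Longrightarrow> x \<noteq> y \<Longrightarrow> {x, y} \<in> E"
    and F: "finite F" "card F + 1 < card A"
    and ab: "a \<in> A" "b \<in> A"
  shows "(adj (E - F))\<^sup>*\<^sup>* a b"
proof (rule ccontr)
  let ?c = "(adj (E - F))\<^sup>*\<^sup>*"
  assume nc: "\<not> ?c a b"
  have edge_in_F: "{x, y} \<in> F" if "x \<in> A" "y \<in> A" "x \<noteq> y" "\<not> ?c x y" for x y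
    using complete[OF that(1-3)] that(4) adj_rtranclp_edge[of x y "E - F"] by blast
  define f where
    "f c = (if c = b then {a, b} else if {a, c} \<in> F then {a, c} else {c, b})" for c
  have "f c \<in> F" if "c \<in> A - {a}" for c
  proof -
    have "?c a c \<Longrightarrow> \<not> ?c c b" using nc rtranclp_trans by metis
    then show ?thesis
      using that ab nc edge_in_F[of a b] edge_in_F[of a c] edge_in_F[of c b]
      unfolding f_def by auto
  qed
  moreover have "inj_on f (A - {a})"
    by (rule inj_onI) (auto simp: f_def doubleton_eq_iff split: if_splits)
  ultimately have "card (A - {a}) \<le> card F"
    using card_inj_on_le[of f "A - {a}" F] F(1) by blast
  then show False using F(2) ab(1) by (simp add: card_Diff_singleton_if)
qed

lemma edge_connectivity_eqI:
  assumes "F \<subseteq> E" "card F = n" "\<not> connected_graph V (E - F)"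
    and "\<And>F. F \<subseteq> E \<Longrightarrow> card F < n \<Longrightarrow> connected_graph V (E - F)"
  shows "edge_connectivity V E = n"
  unfolding edge_connectivity_def
  by (rule Least_equality) (use assms in \<open>blast, meson not_le\<close>)

lemma max_code_eqI:
  assumes "connectivity_code V E C" "card C = n"
    and "\<And>C. connectivity_code V E C \<Longrightarrow> card C \<le> n"
  shows "max_code V E = n"
  unfolding max_code_def
proof (rule Max_eqI)
  show "finite {card C | C. connectivity_code V E C}"
    by (rule finite_subset[of _ "{..n}"]) (use assms(3) in auto)
qed (use assms in auto)

lemma ex_pair_agreeing_on:
  assumes "finite A" "card A \<le> k" "finite C" "card C = 2 ^ k + 1"
  obtains P where "P \<subseteq> C" "card P = 2" "\<And>X Y. X \<in> P \<Longrightarrow> Y \<in> P \<Longrightarrow> X \<inter> A = Y \<inter> A"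
proof -
  have "card (Pow A) \<le> 2 ^ k"
    using assms(1,2) by (simp add: card_Pow power_increasing)
  then have "\<not> inj_on (\<lambda>X. X \<inter> A) C"
    using card_inj_on_le[of "\<lambda>X. X \<inter> A" C "Pow A"] assms(1,4) by auto
  then obtain X Y where "X \<in> C" "Y \<in> C" "X \<noteq> Y" "X \<inter> A = Y \<inter> A"
    unfolding inj_on_def by blast
  then show ?thesis by (intro that[of "{X, Y}"]) auto
qed

lemma connectivity_code_card_le:
  assumes code: "connectivity_code V E C"
    and M: "\<And>i. i < s \<Longrightarrow> finite (M i) \<and> card (M i) \<le> k"
    and cut: "\<And>i j. i < s \<Longrightarrow> j < s \<Longrightarrow> i \<noteq> j \<Longrightarrow> \<not> connected_graph V (E - (M i \<union> M j))"
    and many: "(2 ^ k + 1) choose 2 < s"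
  shows "card C \<le> 2 ^ k"
proof (rule ccontr)
  assume "\<not> card C \<le> 2 ^ k"
  then obtain C' where C': "C' \<subseteq> C" "card C' = 2 ^ k + 1" "finite C'"
    by (metis not_less_eq_eq obtain_subset_with_card_n Suc_eq_plus1)
  have "\<exists>Q. Q \<subseteq> C' \<and> card Q = 2 \<and> (\<forall>X\<in>Q. \<forall>Y\<in>Q. X \<inter> M i = Y \<inter> M i)"
    if i: "i < s" for i
  proof -
    obtain Q where "Q \<subseteq> C'" "card Q = 2" "\<And>X Y. X \<in> Q \<Longrightarrow> Y \<in> Q \<Longrightarrow> X \<inter> M i = Y \<inter> M i"
      using ex_pair_agreeing_on[of "M i" k C'] M[OF i] C'(2,3) by blast
    then show ?thesis by blast
  qed
  then obtain P where P: "\<And>i. i < s \<Longrightarrow>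
      P i \<subseteq> C' \<and> card (P i) = 2 \<and> (\<forall>X\<in>P i. \<forall>Y\<in>P i. X \<inter> M i = Y \<inter> M i)"
    by metis
  have "inj_on P {..<s}"
  proof (rule inj_onI, rule ccontr)
    fix i j assume ij: "i \<in> {..<s}" "j \<in> {..<s}" "P i = P j" "i \<noteq> j"
    obtain X Y where XY: "P i = {X, Y}" "X \<noteq> Y" using P[of i] ij(1) by (meson card_2_iff lessThan_iff)
    have "X \<in> C" "Y \<in> C" using XY(1) P[of i] ij(1) C'(1) by auto
    then have conn: "connected_graph V (sym_diff X Y)" and "X \<subseteq> E" "Y \<subseteq> E"
      using code XY(2) unfolding connectivity_code_def by blast+
    moreover have "X \<inter> M l = Y \<inter> M l" if "l \<in> {i, j}" for l
    proof -
      have "X \<in> P l" "Y \<in> P l" using XY(1) ij(3) that by auto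
      then show ?thesis using P[of l] ij(1,2) that by blast
    qed
    ultimately have "sym_diff X Y \<subseteq> E - (M i \<union> M j)"
      unfolding sym_diff_def by blast
    then show False using connected_graph_mono[OF _ conn] cut ij by auto
  qed
  moreover have "P ` {..<s} \<subseteq> {Q. Q \<subseteq> C' \<and> card Q = 2}" using P by blast
  ultimately have "s \<le> card {Q. Q \<subseteq> C' \<and> card Q = 2}"
    using card_inj_on_le[of P "{..<s}"] C'(3) by simp
  then show False using many n_subsets[OF C'(3), of 2] C'(2) by simp
qed

lemma connectivity_code_of_disjoint_connected:
  assumes sub: "\<And>j. j < k \<Longrightarrow> T j \<subseteq> E"
    and ne: "\<And>j. j < k \<Longrightarrow> T j \<noteq> {}"
    and conn: "\<And>j. j < k \<Longrightarrow> connected_graph V (T j)"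
    and disj: "\<And>j j'. j < k \<Longrightarrow> j' < k \<Longrightarrow> j \<noteq> j' \<Longrightarrow> T j \<inter> T j' = {}"
  shows "\<exists>C. connectivity_code V E C \<and> card C = 2 ^ k"
proof -
  define U where "U S = (\<Union>j\<in>S. T j)" for S
  have outside: "T j \<inter> U S = {}" if "S \<subseteq> {..<k}" "j < k" "j \<notin> S" for j S
  proof -
    have "T j \<inter> T j' = {}" if "j' \<in> S" for j'
      using disj[of j j'] that \<open>S \<subseteq> {..<k}\<close> \<open>j < k\<close> \<open>j \<notin> S\<close> by blast
    then show ?thesis unfolding U_def by blast
  qed
  have differ: "T j \<subseteq> U S - U S'"
    if SS: "S \<subseteq> {..<k}" "S' \<subseteq> {..<k}" "j \<in> S" "j \<notin> S'" for S S' j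
  proof -
    have "T j \<subseteq> U S" using SS(3) unfolding U_def by blast
    then show ?thesis using outside[OF SS(2) _ SS(4)] SS(1,3) by blast
  qed
  have "U S \<noteq> U S' \<and> connected_graph V (sym_diff (U S) (U S'))"
    if SS: "S \<subseteq> {..<k}" "S' \<subseteq> {..<k}" "S \<noteq> S'" for S S'
  proof -
    obtain j where j: "j < k" "T j \<subseteq> sym_diff (U S) (U S')"
    proof (cases "S \<subseteq> S'")
      case True
      then obtain j where j: "j \<in> S'" "j \<notin> S" using SS(3) by blast
      then have "T j \<subseteq> sym_diff (U S) (U S')"
        using differ[OF SS(2,1) j] unfolding sym_diff_def by blast
      then show ?thesis using that j(1) SS(2) by blast
    next
      case False
      then obtain j where j: "j \<in> S" "j \<notin> S'" by blast
      then have "T j \<subseteq> sym_diff (U S) (U S')"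
        using differ[OF SS(1,2) j] unfolding sym_diff_def by blast
      then show ?thesis using that j(1) SS(1) by blast
    qed
    then have "U S \<noteq> U S'" using ne[of j] unfolding sym_diff_def by blast
    moreover have "connected_graph V (sym_diff (U S) (U S'))"
      using connected_graph_mono[OF j(2) conn[OF j(1)]] .
    ultimately show ?thesis ..
  qed
  moreover have "U S \<subseteq> E" if "S \<subseteq> {..<k}" for S
    using sub that unfolding U_def by blast
  ultimately have "connectivity_code V E (U ` Pow {..<k})" "inj_on U (Pow {..<k})"
    unfolding connectivity_code_def inj_on_def by auto
  moreover have "card (Pow {..<k :: nat}) = 2 ^ k" by (simp add: card_Pow)
  ultimately show ?thesis using card_image by metis
qed

lemma zigzag_partner:
  fixes N :: nat
  assumes "2 * j + 1 < N" "x < N"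
  obtains y where "y < N" "(x + y) mod N = 2 * j" "(y + Suc x) mod N = 2 * j + 1"
proof
  let ?y = "(2 * j + N - x) mod N"
  show "?y < N" using assms by simp
  have "(x + ?y) mod N = (x + (2 * j + N - x)) mod N" by (simp add: mod_add_right_eq)
  also have "\<dots> = 2 * j" using assms by simp
  finally show x_y: "(x + ?y) mod N = 2 * j" .
  have "(?y + Suc x) mod N = Suc ((x + ?y) mod N) mod N"
    by (simp only: mod_Suc_eq add.commute[of ?y] add_Suc_right)
  then show "(?y + Suc x) mod N = 2 * j + 1" using x_y assms by simp
qed

locale clique_cycle =
  fixes k s :: nat and M :: "nat \<Rightarrow> (nat \<times> nat) set set"
  assumes three_le_s: "3 \<le> s"
    and card_M: "\<And>i. i < s \<Longrightarrow> card (M i) = k"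
    and M_subset: "\<And>i. i < s \<Longrightarrow>
      M i \<subseteq> {{(i, a), ((i + 1) mod s, b)} | a b. a < 2 * k + 1 \<and> b < 2 * k + 1}"
begin

abbreviation "N \<equiv> 2 * k + 1"
abbreviation "V \<equiv> {0..<s} \<times> {0..<N}"
abbreviation "clique_edges \<equiv> {{(i, a), (i, b)} | i a b. i < s \<and> a < N \<and> b < N \<and> a \<noteq> b}"
abbreviation "E \<equiv> clique_edges \<union> (\<Union>i<s. M i)"

lemma succ_mod: "i < s \<Longrightarrow> (i + 1) mod s = (if i + 1 < s then i + 1 else 0)"
  by (cases "i + 1 = s") auto

lemma M_edge: "i < s \<Longrightarrow> e \<in> M i \<Longrightarrow> \<exists>a b. a < N \<and> b < N \<and> e = {(i, a), ((i + 1) mod s, b)}"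
  using M_subset by blast

lemma M_edge_not_clique_edge: "i < s \<Longrightarrow> {(i, a), ((i + 1) mod s, b)} \<noteq> {(c, x), (c, y)}"
  using succ_mod[of i] three_le_s by (auto simp: doubleton_eq_iff split: if_splits)

lemma M_disjoint:
  assumes "i < s" "j < s" "i \<noteq> j"
  shows "M i \<inter> M j = {}"
proof -
  have False if e: "e \<in> M i" "e \<in> M j" for e
  proof -
    obtain a b a' b' where "e = {(i, a), ((i + 1) mod s, b)}" "e = {(j, a'), ((j + 1) mod s, b')}"
      using M_edge[OF assms(1) e(1)] M_edge[OF assms(2) e(2)] by blast
    moreover have "(i + 1) mod s \<noteq> i" using succ_mod[OF assms(1)] three_le_s by simp
    ultimately have "(j + 1) mod s = i" "(i + 1) mod s = j"
      using assms(3) by (metis insertCI insertE prod.inject empty_iff)+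
    then show False
      using succ_mod[OF assms(1)] succ_mod[OF assms(2)] three_le_s by (auto split: if_splits)
  qed
  then show ?thesis by blast
qed

lemma E_subset_Pow_V: "E \<subseteq> Pow V"
proof
  fix e assume "e \<in> E"
  then show "e \<in> Pow V"
  proof
    assume "e \<in> (\<Union>i<s. M i)"
    then obtain i where "i < s" "e \<in> M i" by blast
    then show ?thesis using M_edge[of i e] by auto
  qed auto
qed

lemma finite_E: "finite E"
  by (rule finite_subset[OF E_subset_Pow_V]) simp

lemma finite_M: "i < s \<Longrightarrow> finite (M i)"
  by (rule rev_finite_subset[OF finite_E]) blast

lemma card_M_Un: "i < s \<Longrightarrow> j < s \<Longrightarrow> i \<noteq> j \<Longrightarrow> card (M i \<union> M j) = 2 * k"
  using card_Un_disjoint[OF finite_M finite_M M_disjoint, of i j] card_M[of i] card_M[of j] by simp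

lemma E_minus_two_M_disconnected:
  assumes "i < s" "j < s" "i \<noteq> j"
  shows "\<not> connected_graph V (E - (M i \<union> M j))"
proof -
  have cut: "\<not> connected_graph V (E - (M i \<union> M j))" if ij: "i < j" "j < s" for i j
  proof (rule not_connected_graph_if_closed[of "(j, 0)" _ "(i, 0)" "{x. i < fst x \<and> fst x \<le> j}"])
    fix x y assume xy: "{x, y} \<in> E - (M i \<union> M j)" "x \<in> {x. i < fst x \<and> fst x \<le> j}"
    from xy(1) have "{x, y} \<in> E" "{x, y} \<notin> M i \<union> M j" by simp_all
    from this(1) show "y \<in> {x. i < fst x \<and> fst x \<le> j}"
    proof
      assume "{x, y} \<in> clique_edges"
      then have "fst y = fst x" by (auto simp: doubleton_eq_iff)
      then show ?thesis using xy(2) by simp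
    next
      assume "{x, y} \<in> (\<Union>l<s. M l)"
      then obtain l where l: "l < s" "{x, y} \<in> M l" "l \<noteq> i" "l \<noteq> j"
        using \<open>{x, y} \<notin> M i \<union> M j\<close> by blast
      then obtain a b where "{x, y} = {(l, a), ((l + 1) mod s, b)}" using M_edge by blast
      moreover have "(i < l \<and> l \<le> j) \<longleftrightarrow> (i < (l + 1) mod s \<and> (l + 1) mod s \<le> j)"
        using succ_mod[OF l(1)] l(3,4) ij by auto
      ultimately show ?thesis using xy(2) by (auto simp: doubleton_eq_iff)
    qed
  qed (use ij in simp_all)
  from assms(3) consider "i < j" | "j < i" by linarith
  then show ?thesis using cut[of i j] cut[of j i] assms(1,2) by cases (simp_all add: Un_commute)
qed

lemma clique_connected:
  assumes "finite F" "card F < 2 * k" "c < s" "a < N" "b < N"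
  shows "(adj (E - F))\<^sup>*\<^sup>* (c, a) (c, b)"
proof (rule complete_graph_minus_edges_connected[where A = "{c} \<times> {..<N}"])
  show "card F + 1 < card ({c} \<times> {..<N})" using assms(2) by (simp add: card_cartesian_product)
qed (use assms in auto)

lemma E_minus_few_connected:
  assumes F: "F \<subseteq> E" "card F < 2 * k"
  shows "connected_graph V (E - F)"
proof -
  let ?c = "(adj (E - F))\<^sup>*\<^sup>*"
  have finF: "finite F" using F(1) finite_E finite_subset by blast
  have link: "?c (i, 0) ((i + 1) mod s, 0)" if i: "i < s" "\<not> M i \<subseteq> F" for i
  proof -
    obtain e where e: "e \<in> M i" "e \<notin> F" using i by blast
    obtain a b where ab: "a < N" "b < N" "e = {(i, a), ((i + 1) mod s, b)}"
      using M_edge[OF i(1) e(1)] by blast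
    have "e \<in> E - F" by (intro DiffI UnI2 UN_I[of i]) (use e i(1) in auto)
    then have "?c (i, a) ((i + 1) mod s, b)" unfolding ab(3) by (rule adj_rtranclp_edge)
    moreover have "?c (i, 0) (i, a)" "?c ((i + 1) mod s, b) ((i + 1) mod s, 0)"
      using clique_connected[OF finF F(2)] ab i(1) by simp_all
    ultimately show ?thesis by (meson rtranclp_trans)
  qed
  obtain i\<^sub>0 where i\<^sub>0: "i\<^sub>0 < s" "\<And>i. i < s \<Longrightarrow> i \<noteq> i\<^sub>0 \<Longrightarrow> \<not> M i \<subseteq> F"
  proof (cases "\<exists>i<s. M i \<subseteq> F")
    case True
    then obtain i\<^sub>0 where "i\<^sub>0 < s" "M i\<^sub>0 \<subseteq> F" by blast
    moreover have "\<not> M i \<subseteq> F" if "i < s" "i \<noteq> i\<^sub>0" for i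
    proof
      assume "M i \<subseteq> F"
      then have "card (M i \<union> M i\<^sub>0) \<le> card F" using \<open>M i\<^sub>0 \<subseteq> F\<close> finF by (simp add: card_mono)
      then show False using card_M_Un[of i i\<^sub>0] that \<open>i\<^sub>0 < s\<close> F(2) by simp
    qed
    ultimately show ?thesis using that by blast
  next
    case False
    then show ?thesis using that[of 0] three_le_s by auto
  qed
  show ?thesis
  proof (rule connected_graphI_hub[where h = "(i\<^sub>0, 0)"])
    show "V \<noteq> {}" using three_le_s by auto
    fix v assume "v \<in> V"
    then obtain c a where v: "v = (c, a)" "c < s" "a < N" by auto
    have "?c (c, a) (c, 0)" using clique_connected[OF finF F(2) v(2) v(3)] by simp
    moreover have "?c (c, 0) (i\<^sub>0, 0)"
      using cycle_reaches[OF i\<^sub>0(1) v(2), of "adj (E - F)" "\<lambda>i. (i, 0)"] link i\<^sub>0(2) by simp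
    ultimately show "?c v (i\<^sub>0, 0)" using v(1) by (meson rtranclp_trans)
  qed
qed

lemma edge_connectivity_E: "edge_connectivity V E = 2 * k"
proof (rule edge_connectivity_eqI)
  show "M 0 \<union> M 1 \<subseteq> E" using three_le_s by auto
  show "card (M 0 \<union> M 1) = 2 * k" using card_M_Un three_le_s by simp
  show "\<not> connected_graph V (E - (M 0 \<union> M 1))"
    using E_minus_two_M_disconnected three_le_s by simp
qed (rule E_minus_few_connected)

text \<open>Grouping the clique edges \<open>{a, b}\<close> by the residue \<open>(a + b) mod N\<close> in pairs
  \<open>{2 j, 2 j + 1}\<close> splits every clique into \<open>k\<close> edge-disjoint connected spanning subgraphs
  (zigzag paths \<open>x, 2 j - x, x + 1, \<dots>\<close>); the \<open>j\<close>-th edge of every \<open>M i\<close> then joins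
  them around the cycle.\<close>

definition matching_edge :: "nat \<Rightarrow> nat \<Rightarrow> (nat \<times> nat) set" where
  "matching_edge i = (SOME f. bij_betw f {..<k} (M i))"

definition colour_class :: "nat \<Rightarrow> (nat \<times> nat) set set" where
  "colour_class j = {{(i, a), (i, b)} | i a b.
     i < s \<and> a < N \<and> b < N \<and> a \<noteq> b \<and> (a + b) mod N \<in> {2 * j, 2 * j + 1}}"

definition layer :: "nat \<Rightarrow> (nat \<times> nat) set set" where
  "layer j = colour_class j \<union> (\<lambda>i. matching_edge i j) ` {..<s}"

lemma bij_betw_matching_edge:
  assumes "i < s"
  shows "bij_betw (matching_edge i) {..<k} (M i)"
proof -
  have "\<exists>f. bij_betw f {..<k} (M i)"
    using ex_bij_betw_nat_finite[OF finite_M[OF assms]] card_M[OF assms]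
    by (simp add: atLeast0LessThan)
  then show ?thesis unfolding matching_edge_def by (rule someI_ex)
qed

lemma matching_edge_in_M: "i < s \<Longrightarrow> j < k \<Longrightarrow> matching_edge i j \<in> M i"
  using bij_betw_matching_edge bij_betwE by blast

lemma matching_edge_eq_imp_eq:
  assumes "i < s" "i' < s" "j < k" "j' < k" "matching_edge i j = matching_edge i' j'"
  shows "j = j'"
proof -
  have "i = i'"
    using M_disjoint[of i i'] matching_edge_in_M[of i j] matching_edge_in_M[of i' j'] assms by auto
  then show ?thesis
    using bij_betw_matching_edge[OF assms(1)] assms(3-5) unfolding bij_betw_def inj_on_def by auto
qed

lemma colour_class_subset: "colour_class j \<subseteq> clique_edges"
  unfolding colour_class_def by blast

lemma clique_edge_notin_M:
  assumes "e \<in> clique_edges" "l < s"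
  shows "e \<notin> M l"
proof
  assume "e \<in> M l"
  then obtain a b where "e = {(l, a), ((l + 1) mod s, b)}" using M_edge[OF assms(2)] by blast
  moreover obtain c x y where "e = {(c, x), (c, y)}" using assms(1) by blast
  ultimately show False using M_edge_not_clique_edge[OF assms(2)] by metis
qed

lemma colour_class_disjoint:
  assumes "j \<noteq> j'"
  shows "colour_class j \<inter> colour_class j' = {}"
proof (rule equals0I)
  fix e assume "e \<in> colour_class j \<inter> colour_class j'"
  then obtain i a b i' a' b' where e: "e = {(i, a), (i, b)}" "e = {(i', a'), (i', b')}"
    and r: "(a + b) mod N \<in> {2 * j, 2 * j + 1}" "(a' + b') mod N \<in> {2 * j', 2 * j' + 1}"
    unfolding colour_class_def by blast
  have "a + b = a' + b'" using e by (auto simp: doubleton_eq_iff)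
  then show False using r assms by auto
qed

lemma layer_subset_E: "j < k \<Longrightarrow> layer j \<subseteq> E"
  unfolding layer_def
  by (intro Un_mono colour_class_subset) (use matching_edge_in_M in blast)

lemma layer_nonempty: "layer j \<noteq> {}"
  unfolding layer_def using three_le_s by (simp add: lessThan_empty_iff)

lemma layer_disjoint:
  assumes "j < k" "j' < k" "j \<noteq> j'"
  shows "layer j \<inter> layer j' = {}"
proof (rule equals0I)
  have notin_colour_class: "matching_edge i l \<notin> colour_class c" if "i < s" "l < k" for i l c
    using clique_edge_notin_M[OF subsetD[OF colour_class_subset] that(1)] matching_edge_in_M[OF that]
    by blast
  fix e assume e: "e \<in> layer j \<inter> layer j'"
  show False
  proof (cases "e \<in> colour_class j")
    case True
    then have "e \<notin> colour_class j'" using colour_class_disjoint[OF assms(3)] by blast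
    then show False using e True notin_colour_class assms unfolding layer_def by blast
  next
    case False
    then obtain i where i: "i < s" "e = matching_edge i j" using e unfolding layer_def by blast
    then have "e \<notin> colour_class j'" using notin_colour_class assms(1) by blast
    then obtain i' where "i' < s" "e = matching_edge i' j'" using e unfolding layer_def by blast
    then show False using matching_edge_eq_imp_eq[of i i' j j'] i assms by simp
  qed
qed

lemma layer_colour_edge:
  assumes "i < s" "a < N" "b < N" "(a + b) mod N \<in> {2 * j, 2 * j + 1}"
  shows "(adj (layer j))\<^sup>*\<^sup>* (i, a) (i, b)"
proof (cases "a = b")
  case False
  then have "{(i, a), (i, b)} \<in> layer j" using assms unfolding layer_def colour_class_def by blast
  then show ?thesis by (rule adj_rtranclp_edge)
qed simp

lemma layer_clique_path:
  assumes "j < k" "i < s" "x < N"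
  shows "(adj (layer j))\<^sup>*\<^sup>* (i, 0) (i, x)"
proof (rule rtranclp_chain[of 0 x _ "\<lambda>t. (i, t)", simplified])
  fix t assume "t < x"
  then obtain y where y: "y < N" "(t + y) mod N = 2 * j" "(y + Suc t) mod N = 2 * j + 1"
    using zigzag_partner[of j N t] assms by auto
  have "Suc t < N" using \<open>t < x\<close> assms(3) by simp
  then have "(adj (layer j))\<^sup>*\<^sup>* (i, t) (i, y)" "(adj (layer j))\<^sup>*\<^sup>* (i, y) (i, Suc t)"
    using layer_colour_edge[of i t y j] layer_colour_edge[of i y "Suc t" j] y assms(2) by simp_all
  then show "(adj (layer j))\<^sup>*\<^sup>* (i, t) (i, Suc t)" by (rule rtranclp_trans)
qed

lemma layer_connected:
  assumes j: "j < k"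
  shows "connected_graph V (layer j)"
proof -
  let ?c = "(adj (layer j))\<^sup>*\<^sup>*"
  have link: "?c (i, 0) ((i + 1) mod s, 0)" if i: "i < s" for i
  proof -
    obtain a b where ab: "a < N" "b < N" "matching_edge i j = {(i, a), ((i + 1) mod s, b)}"
      using M_edge[OF i matching_edge_in_M[OF i j]] by blast
    have "matching_edge i j \<in> layer j" unfolding layer_def using i by blast
    then have "?c (i, a) ((i + 1) mod s, b)" unfolding ab(3) by (rule adj_rtranclp_edge)
    moreover have "?c (i, 0) (i, a)" "?c ((i + 1) mod s, 0) ((i + 1) mod s, b)"
      using layer_clique_path[OF j] ab i by simp_all
    ultimately show ?thesis by (meson adj_rtranclp_sym rtranclp_trans)
  qed
  show ?thesis
  proof (rule connected_graphI_hub[where h = "(0, 0)"])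
    show "V \<noteq> {}" using three_le_s by auto
    fix v assume "v \<in> V"
    then obtain c a where v: "v = (c, a)" "c < s" "a < N" by auto
    have "?c (c, a) (c, 0)" using layer_clique_path[OF j v(2,3)] by (rule adj_rtranclp_sym)
    moreover have "?c (c, 0) (0, 0)"
      using cycle_reaches[of 0 s c "adj (layer j)" "\<lambda>i. (i, 0)"] v(2) link by simp
    ultimately show "?c v (0, 0)" using v(1) by (meson rtranclp_trans)
  qed
qed

lemma ex_connectivity_code: "\<exists>C. connectivity_code V E C \<and> card C = 2 ^ k"
  by (rule connectivity_code_of_disjoint_connected[where T = layer])
    (assumption | rule layer_subset_E layer_nonempty layer_connected layer_disjoint)+

end

theorem mainTheorem11:
  fixes k s :: nat and M :: "nat \<Rightarrow> (nat \<times> nat) set set"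
  assumes "k \<ge> 1"
    and "s > 2 ^ (k - 1) * (2 ^ k + 1)"
    and "\<forall>i<s. card (M i) = k"
    and "\<forall>i<s. M i \<subseteq> {{(i, a), ((i + 1) mod s, b)} | a b. a < 2 * k + 1 \<and> b < 2 * k + 1}"
    and "\<forall>i<s. \<forall>e\<in>M i. \<forall>e'\<in>M i. e \<noteq> e' \<longrightarrow> e \<inter> e' = {}"
  shows "edge_connectivity ({0..<s} \<times> {0..<2 * k + 1})
            ({{(i, a), (i, b)} | i a b. i < s \<and> a < 2 * k + 1 \<and> b < 2 * k + 1 \<and> a \<noteq> b}
             \<union> (\<Union>i<s. M i)) = 2 * k
       \<and> max_code ({0..<s} \<times> {0..<2 * k + 1})
            ({{(i, a), (i, b)} | i a b. i < s \<and> a < 2 * k + 1 \<and> b < 2 * k + 1 \<and> a \<noteq> b}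
             \<union> (\<Union>i<s. M i)) = 2 ^ k"
proof -
  have pow: "(2::nat) ^ k = 2 * 2 ^ (k - 1)"
    using assms(1) by (metis Suc_diff_1 less_le_trans power_Suc zero_less_one)
  then have choose: "(2 ^ k + 1) choose 2 < s"
    using assms(2) by (simp add: choose_two)
  have "1 * 3 \<le> (2::nat) ^ (k - 1) * (2 ^ k + 1)"
    by (rule mult_le_mono) (use pow in simp_all)
  then have "3 \<le> s" using assms(2) by linarith
  interpret clique_cycle k s M
    using \<open>3 \<le> s\<close> assms(3,4) by unfold_locales auto
  obtain C where C: "connectivity_code V E C" "card C = 2 ^ k"
    using ex_connectivity_code by blast
  have "max_code V E = 2 ^ k"
  proof (rule max_code_eqI[OF C])
    fix C' assume "connectivity_code V E C'"
    then show "card C' \<le> 2 ^ k"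
      by (rule connectivity_code_card_le[where M = M, OF _ _ E_minus_two_M_disconnected choose])
        (simp add: finite_M card_M)
  qed
  then show ?thesis using edge_connectivity_E by simp
qed

end
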